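(* Let $q$ be an odd prime power, $n=2^v$ with $v\ge1$, and $t$ an integer with $qt\equiv t\pmod{2^v}$ and $\nu_2(t)<v$. Type-I duadic splittings of $\mathbb{Z}_{2^v}$ given by $\tau_t$ exist if and only if $\nu_2(t)<\nu_2(q-1)$.
   Context: $\mu_q:\mathbb{Z}_n\to\mathbb{Z}_n$, $i\mapsto qi\bmod n$; $P$ is $\mu_q$-invariant if $\mu_q(P)=P$. $\tau_t:\mathbb{Z}_n\to\mathbb{Z}_n$, $i\mapsto i+t\bmod n$ (a $q$-translation). Type-I duadic splittings of $\mathbb{Z}_n$ given by $\tau_t$ exist if there is a $\mu_q$-invariant $P$ with $\mathbb{Z}_n=P\cup\tau_t(P)$ a disjoint union. $\nu_2$ is the $2$-adic valuation. *)

theory Defs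
  imports "HOL-Computational_Algebra.Primes"
begin

definition Zn :: "nat \<Rightarrow> int set" where
  "Zn n = {0..<int n}"

definition mu :: "nat \<Rightarrow> int \<Rightarrow> int \<Rightarrow> int" where
  "mu n q i = (q * i) mod int n"

definition tau :: "nat \<Rightarrow> int \<Rightarrow> int \<Rightarrow> int" where
  "tau n t i = (i + t) mod int n"

definition mu_invariant :: "nat \<Rightarrow> int \<Rightarrow> int set \<Rightarrow> bool" where
  "mu_invariant n q P \<longleftrightarrow> mu n q ` P = P"

definition typeI_duadic_exists :: "nat \<Rightarrow> int \<Rightarrow> int \<Rightarrow> bool" where
  "typeI_duadic_exists n q t \<longleftrightarrow>
     (\<exists>P. P \<subseteq> Zn n \<and> mu_invariant n q P \<and>
          P \<union> tau n t ` P = Zn n \<and> P \<inter> tau n t ` P = {})"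

definition prime_power :: "nat \<Rightarrow> bool" where
  "prime_power q \<longleftrightarrow> (\<exists>p k. prime p \<and> k \<ge> 1 \<and> q = p ^ k)"

abbreviation nu2 :: "int \<Rightarrow> nat" where
  "nu2 x \<equiv> multiplicity (2::int) x"

end

theory Submission
  imports Defs "HOL-Number_Theory.Cong"
begin

text \<open>If a splitting \<open>P\<close> exists, the congruence \<open>q x \<equiv> x + t\<close> has no solution:
  a solution in \<open>P\<close> would put \<open>\<mu>\<^sub>q(x) = \<tau>\<^sub>t(x)\<close> in \<open>P \<inter> \<tau>\<^sub>t(P)\<close>, and since \<open>q t \<equiv> t\<close>
  a solution \<open>\<tau>\<^sub>t(y)\<close> outside \<open>P\<close> makes \<open>y \<in> P\<close> a solution too. For \<open>n = 2\<^sup>v\<close> the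
  congruence \<open>(q - 1) x \<equiv> t\<close> is solvable as soon as \<open>\<nu>\<^sub>2(q - 1) \<le> \<nu>\<^sub>2(t)\<close>.
  Conversely, if \<open>2\<^sup>s\<^sup>+\<^sup>1\<close> divides \<open>q - 1\<close>, where \<open>s = \<nu>\<^sub>2(t)\<close>, then \<open>\<mu>\<^sub>q\<close> preserves residues
  modulo \<open>2\<^sup>s\<^sup>+\<^sup>1\<close> while \<open>\<tau>\<^sub>t\<close> shifts them by \<open>2\<^sup>s\<close>, so the elements whose residue
  modulo \<open>2\<^sup>s\<^sup>+\<^sup>1\<close> lies below \<open>2\<^sup>s\<close> form a splitting.\<close>

lemma typeI_duadic_exists_imp_not_cong_shift:
  fixes n :: nat and q t x :: int
  assumes "typeI_duadic_exists n q t" and "n > 0" and "[q * t = t] (mod int n)"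
  shows "\<not> [q * x = x + t] (mod int n)"
proof
  assume sol: "[q * x = x + t] (mod int n)"
  obtain P where P: "P \<subseteq> Zn n" "mu_invariant n q P"
    "P \<union> tau n t ` P = Zn n" "P \<inter> tau n t ` P = {}"
    using assms(1) unfolding typeI_duadic_exists_def by blast
  have no_sol_in_P: "\<not> [q * y = y + t] (mod int n)" if "y \<in> P" for y
  proof
    assume "[q * y = y + t] (mod int n)"
    then have "tau n t y = mu n q y" unfolding tau_def mu_def cong_def by simp
    moreover have "mu n q y \<in> P" using P(2) that unfolding mu_invariant_def by blast
    moreover have "tau n t y \<in> tau n t ` P" using that by (rule imageI)
    ultimately show False using P(4) by (metis IntI empty_iff)
  qed
  have "x mod int n \<in> Zn n" using assms(2) unfolding Zn_def by simp
  then consider "x mod int n \<in> P" | y where "y \<in> P" "x mod int n = tau n t y"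
    using P(3) by blast
  then show False
  proof cases
    case 1
    moreover have "[q * (x mod int n) = x mod int n + t] (mod int n)"
      using sol unfolding cong_def by (simp add: mod_mult_right_eq mod_add_left_eq)
    ultimately show False using no_sol_in_P by blast
  next
    case 2
    then have shift: "int n dvd x - (y + t)" unfolding tau_def by (simp add: mod_eq_dvd_iff)
    have "int n dvd q * x - (x + t)" and "int n dvd q * t - t"
      using sol assms(3) by (simp_all add: cong_iff_dvd_diff)
    with shift have "int n dvd (q * x - (x + t)) - q * (x - (y + t)) + (x - (y + t)) - (q * t - t)"
      by (meson dvd_add dvd_diff dvd_mult)
    then have "[q * y = y + t] (mod int n)"
      by (simp add: cong_iff_dvd_diff algebra_simps)
    then show False using no_sol_in_P 2(1) by blast
  qed
qed

lemma gcd_prime_power_dvd_power_multiplicity: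
  fixes p m :: int
  assumes "prime p" and "m \<noteq> 0"
  shows "gcd m (p ^ v) dvd p ^ multiplicity p m"
proof -
  have "\<not> is_unit p" using assms(1) not_prime_unit by blast
  then obtain w where m: "m = p ^ multiplicity p m * w" and "\<not> p dvd w"
    using assms(2) by (metis multiplicity_decompose')
  then have "coprime (p ^ v) w"
    using prime_imp_coprime[OF assms(1)] by simp
  then have "coprime (gcd m (p ^ v)) w"
    by (rule coprime_divisors[OF gcd_dvd2 dvd_refl])
  moreover have "gcd m (p ^ v) dvd p ^ multiplicity p m * w"
    unfolding m[symmetric] by (rule gcd_dvd1)
  ultimately show ?thesis using coprime_dvd_mult_left_iff by blast
qed

lemma cong_shift_solvable_mod_prime_power:
  fixes p q t :: int
  assumes "prime p" and "q \<noteq> 1" and "multiplicity p (q - 1) \<le> multiplicity p t"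
  shows "\<exists>x. [q * x = x + t] (mod p ^ v)"
proof -
  have "gcd (q - 1) (p ^ v) dvd p ^ multiplicity p (q - 1)"
    using assms(1,2) by (intro gcd_prime_power_dvd_power_multiplicity) simp_all
  also have "\<dots> dvd t"
    using assms(3) by (rule multiplicity_dvd')
  finally obtain x where "[(q - 1) * x = t] (mod p ^ v)"
    using cong_solve_dvd_int by blast
  then have "[q * x = x + t] (mod p ^ v)"
    by (simp add: cong_iff_dvd_diff algebra_simps)
  then show ?thesis ..
qed

lemma mod_double_power_multiplicity:
  fixes t :: int
  assumes "t \<noteq> 0"
  shows "t mod 2 ^ Suc (multiplicity 2 t) = 2 ^ multiplicity 2 t"
proof -
  define s where "s = multiplicity 2 t"
  obtain u where t: "t = 2 ^ s * u" and "odd u"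
    using multiplicity_decompose'[of t 2] assms unfolding s_def by auto
  from \<open>odd u\<close> obtain m where "u = 2 * m + 1" by (rule oddE)
  with t have "t = 2 ^ s + m * 2 ^ Suc s" by (simp add: algebra_simps)
  then have "t mod 2 ^ Suc s = 2 ^ s mod 2 ^ Suc s" by (simp only: mod_mult_self1)
  then show ?thesis unfolding s_def[symmetric] by simp
qed

lemma mod_double_diff_less_half_iff:
  fixes h t x :: int
  assumes "h > 0" and "t mod (2 * h) = h"
  shows "(x - t) mod (2 * h) < h \<longleftrightarrow> h \<le> x mod (2 * h)"
proof -
  define r where "r = x mod (2 * h)"
  have r: "0 \<le> r" "r < 2 * h" unfolding r_def using assms(1) by simp_all
  have "(x - t) mod (2 * h) = (r - h) mod (2 * h)"
    unfolding r_def using assms(2) by (metis mod_diff_eq)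
  also have "\<dots> = (if h \<le> r then r - h else r + h)"
  proof (cases "h \<le> r")
    case False
    have "(r - h) mod (2 * h) = (r + h + (-1) * (2 * h)) mod (2 * h)" by simp
    also have "\<dots> = r + h" using False r by (simp only: mod_mult_self1) simp
    finally show ?thesis using False by simp
  qed (use r in simp)
  finally show ?thesis unfolding r_def[symmetric] using r by simp
qed

lemma inj_on_mu:
  assumes "coprime q (int n)"
  shows "inj_on (mu n q) (Zn n)"
proof (rule inj_onI)
  fix x y assume x: "x \<in> Zn n" and y: "y \<in> Zn n" and "mu n q x = mu n q y"
  then have "[q * x = q * y] (mod int n)" by (simp add: mu_def cong_def)
  then have "[x = y] (mod int n)" using assms by (simp add: cong_mult_lcancel)
  with x y show "x = y" by (simp add: cong_def Zn_def)
qed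

lemma mu_image_residue_class:
  fixes n :: nat and q D :: int and R :: "int set"
  assumes "D dvd int n" and "D dvd q - 1" and "coprime q (int n)"
  shows "mu n q ` {x \<in> Zn n. x mod D \<in> R} = {x \<in> Zn n. x mod D \<in> R}" (is "_ ` ?S = ?S")
proof (rule card_subset_eq)
  show "finite ?S" by (rule finite_subset[of _ "{0..<int n}"]) (auto simp: Zn_def)
  show "mu n q ` ?S \<subseteq> ?S"
  proof
    fix y assume "y \<in> mu n q ` ?S"
    then obtain x where x: "x \<in> Zn n" "x mod D \<in> R" and y: "y = (q * x) mod int n"
      by (auto simp: mu_def)
    have "[q * x = x] (mod D)"
      using dvd_mult2[OF assms(2), of x] by (simp add: cong_iff_dvd_diff algebra_simps)
    then have "y mod D = x mod D"
      using assms(1) unfolding y cong_def by (simp add: mod_mod_cancel)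
    moreover have "y \<in> Zn n" using x(1) unfolding y Zn_def by simp
    ultimately show "y \<in> ?S" using x(2) by simp
  qed
  show "card (mu n q ` ?S) = card ?S"
    by (rule card_image, rule inj_on_subset[OF inj_on_mu[OF assms(3)]]) auto
qed

lemma tau_image_residue_class:
  fixes n :: nat and t D :: int and R :: "int set"
  assumes "D dvd int n"
  shows "tau n t ` {x \<in> Zn n. x mod D \<in> R} = {x \<in> Zn n. (x - t) mod D \<in> R}"
proof (intro equalityI subsetI)
  fix x assume "x \<in> tau n t ` {x \<in> Zn n. x mod D \<in> R}"
  then obtain y where y: "y \<in> Zn n" "y mod D \<in> R" and x: "x = (y + t) mod int n"
    by (auto simp: tau_def)
  have "[x = y + t] (mod D)"
    unfolding x by (rule cong_dvd_modulus[OF _ assms]) simp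
  then have "(x - t) mod D = y mod D"
    using cong_diff[OF _ cong_refl, of x "y + t" D t] by (simp add: cong_def)
  moreover have "x \<in> Zn n" using y(1) unfolding x Zn_def by simp
  ultimately show "x \<in> {x \<in> Zn n. (x - t) mod D \<in> R}" using y(2) by simp
next
  fix x assume x: "x \<in> {x \<in> Zn n. (x - t) mod D \<in> R}"
  define y where "y = (x - t) mod int n"
  have "[y = x - t] (mod D)"
    unfolding y_def by (rule cong_dvd_modulus[OF _ assms]) simp
  then have "y mod D \<in> R" using x by (simp add: cong_def)
  moreover have "y \<in> Zn n" using x unfolding y_def Zn_def by simp
  moreover have "tau n t y = x" using x unfolding y_def tau_def Zn_def by (simp add: mod_add_left_eq)
  ultimately show "x \<in> tau n t ` {x \<in> Zn n. x mod D \<in> R}" by force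
qed

lemma typeI_duadic_exists_of_half_shift:
  fixes n :: nat and q t h :: int
  assumes "2 * h dvd int n" and "2 * h dvd q - 1" and "coprime q (int n)"
    and "h > 0" and "t mod (2 * h) = h"
  shows "typeI_duadic_exists n q t"
proof -
  define P where "P = {x \<in> Zn n. x mod (2 * h) \<in> {..<h}}"
  have "tau n t ` P = {x \<in> Zn n. (x - t) mod (2 * h) \<in> {..<h}}"
    unfolding P_def by (rule tau_image_residue_class[OF assms(1)])
  also have "\<dots> = {x \<in> Zn n. h \<le> x mod (2 * h)}"
    using mod_double_diff_less_half_iff[OF assms(4,5)] by auto
  finally have tau_P: "tau n t ` P = {x \<in> Zn n. h \<le> x mod (2 * h)}" .
  have "P \<subseteq> Zn n" unfolding P_def by blast
  moreover have "mu_invariant n q P"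
    unfolding mu_invariant_def P_def by (rule mu_image_residue_class[OF assms(1-3)])
  moreover have "P \<union> tau n t ` P = Zn n" and "P \<inter> tau n t ` P = {}"
    unfolding tau_P unfolding P_def by auto
  ultimately show ?thesis unfolding typeI_duadic_exists_def by blast
qed

theorem corollary3p5:
  fixes q v :: nat and t :: int
  assumes "prime_power q" and "odd q" and "v \<ge> 1"
    and "(int q * t) mod (2 ^ v) = t mod (2 ^ v)"
    and "t \<noteq> 0" and "nu2 t < v"
  shows "typeI_duadic_exists (2 ^ v) (int q) t \<longleftrightarrow> nu2 t < nu2 (int q - 1)"
proof
  assume "typeI_duadic_exists (2 ^ v) (int q) t"
  moreover have "[int q * t = t] (mod int (2 ^ v))" using assms(4) by (simp add: cong_def)
  ultimately have no_solution: "\<not> [int q * x = x + t] (mod 2 ^ v)" for x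
    using typeI_duadic_exists_imp_not_cong_shift[of "2 ^ v"] by simp
  obtain p k where "prime p" and "k \<ge> 1" and "q = p ^ k"
    using assms(1) unfolding prime_power_def by blast
  then have "int q \<noteq> 1" using prime_gt_1_nat[of p] one_less_power[of p k] by simp
  then show "nu2 t < nu2 (int q - 1)"
    using cong_shift_solvable_mod_prime_power[of 2 "int q" t v] no_solution by force
next
  define s where "s = nu2 t"
  assume "nu2 t < nu2 (int q - 1)"
  then have "2 ^ Suc s dvd int q - 1"
    unfolding s_def by (intro multiplicity_dvd') simp
  moreover have "2 ^ Suc s dvd (2 :: int) ^ v"
    using assms(6) unfolding s_def by (intro le_imp_power_dvd) simp
  moreover have "coprime (int q) (int (2 ^ v))" using assms(2) by simp
  moreover have "t mod 2 ^ Suc s = 2 ^ s"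
    unfolding s_def using assms(5) by (rule mod_double_power_multiplicity)
  ultimately show "typeI_duadic_exists (2 ^ v) (int q) t"
    using typeI_duadic_exists_of_half_shift[of "2 ^ s" "2 ^ v" "int q" t] by simp
qed

end
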